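(* For any vector $|\psi\rangle\in\mathbb{C}^d$ and any positive semidefinite operators $P_1,P_2$ on $\mathbb{C}^d$, $$\langle\psi|P_1|\psi\rangle^2+\langle\psi|P_2|\psi\rangle^2\le\langle\psi|\sqrt{P_1^2+P_2^2}|\psi\rangle^2.$$ *)

theory Defs
  imports Complex_Main "Jordan_Normal_Form.Schur_Decomposition"
begin

definition braket :: "complex vec \<Rightarrow> complex mat \<Rightarrow> complex" where
  "braket v A = (\<Sum>i<dim_vec v. cnj (vec_index v i) * vec_index (A *\<^sub>v v) i)"

definition psd :: "complex mat \<Rightarrow> bool" where
  "psd A \<longleftrightarrow> A \<in> carrier_mat (dim_row A) (dim_row A) \<and> mat_adjoint A = A \<and>
     (\<forall>v \<in> carrier_vec (dim_row A). Re (braket v A) \<ge> 0 \<and> Im (braket v A) = 0)"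

definition psd_sqrt :: "complex mat \<Rightarrow> complex mat" where
  "psd_sqrt A = (THE S. psd S \<and> dim_row S = dim_row A \<and> S * S = A)"

end

theory Submission
  imports Defs "Jordan_Normal_Form.Spectral_Radius"
begin

(* For real c, s with c^2 + s^2 = 1 put H = c P1 + s P2 and S = sqrt(P1^2 + P2^2). Pointwise,
   |c x + s y|^2 <= |x|^2 + |y|^2, so |H v|^2 <= |P1 v|^2 + |P2 v|^2 = |S v|^2 for every v.
   Because S is positive this forces H <= S: a unit eigenvector u of H - S with eigenvalue l > 0
   would give |H u|^2 = |S u|^2 + 2 l <u|S|u> + l^2 > |S u|^2.  Hence
   c <psi|P1|psi> + s <psi|P2|psi> <= <psi|S|psi>, and taking (c, s) parallel to
   (<psi|P1|psi>, <psi|P2|psi>) gives the inequality. *)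

section \<open>The inner product on complex vectors\<close>

definition cinner :: "nat \<Rightarrow> complex vec \<Rightarrow> complex vec \<Rightarrow> complex" where
  "cinner n v w = (\<Sum>i<n. cnj (v $ i) * w $ i)"

lemma index_mult_mat_vec_sum:
  assumes "A \<in> carrier_mat n m" "w \<in> carrier_vec m" "i < n"
  shows "(A *\<^sub>v w) $ i = (\<Sum>j<m. A $$ (i,j) * w $ j)"
  using assms by (simp add: scalar_prod_def lessThan_atLeast0)

lemma index_mult_mat_sum:
  assumes "A \<in> carrier_mat n n" "B \<in> carrier_mat n n" "i < n" "j < n"
  shows "(A * B) $$ (i,j) = (\<Sum>l<n. A $$ (i,l) * B $$ (l,j))"
  using assms by (simp add: scalar_prod_def lessThan_atLeast0)

lemma smult_mat_mult_vec:
  assumes "A \<in> carrier_mat n n" "v \<in> carrier_vec n"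
  shows "(k \<cdot>\<^sub>m A) *\<^sub>v v = k \<cdot>\<^sub>v (A *\<^sub>v v)"
  using assms by (auto simp: scalar_prod_def sum_distrib_left mult.assoc intro!: eq_vecI)

lemma braket_eq_cinner: "v \<in> carrier_vec n \<Longrightarrow> braket v A = cinner n v (A *\<^sub>v v)"
  unfolding braket_def cinner_def by simp

lemma cinner_commute: "cinner n w v = cnj (cinner n v w)"
  unfolding cinner_def by (simp add: mult.commute)

lemma cinner_self: "cinner n v v = of_real (\<Sum>i<n. (cmod (v $ i))\<^sup>2)"
  unfolding cinner_def of_real_sum by (intro sum.cong refl) (metis complex_norm_square mult.commute)

lemma cinner_self_nonneg: "0 \<le> Re (cinner n v v)"
  unfolding cinner_self by (auto intro: sum_nonneg)

lemma Im_cinner_self: "Im (cinner n v v) = 0"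
  unfolding cinner_self by simp

lemma cinner_self_nonpos_imp_zero:
  assumes "v \<in> carrier_vec n" "Re (cinner n v v) \<le> 0"
  shows "v = 0\<^sub>v n"
proof -
  have "(\<Sum>i<n. (cmod (v $ i))\<^sup>2) = 0"
    using assms(2) cinner_self_nonneg[of n v] unfolding cinner_self by simp
  then have "\<forall>i\<in>{..<n}. (cmod (v $ i))\<^sup>2 = 0" by (subst (asm) sum_nonneg_eq_0_iff) auto
  then show ?thesis using assms(1) by (intro eq_vecI) auto
qed

lemma cinner_smult_right: "w \<in> carrier_vec n \<Longrightarrow> cinner n v (c \<cdot>\<^sub>v w) = c * cinner n v w"
  unfolding cinner_def by (simp add: sum_distrib_left algebra_simps)

lemma cinner_smult_left: "v \<in> carrier_vec n \<Longrightarrow> cinner n (c \<cdot>\<^sub>v v) w = cnj c * cinner n v w"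
  unfolding cinner_def by (simp add: sum_distrib_left algebra_simps)

lemma cinner_add_right:
  "w \<in> carrier_vec n \<Longrightarrow> x \<in> carrier_vec n \<Longrightarrow> cinner n v (w + x) = cinner n v w + cinner n v x"
  unfolding cinner_def by (simp add: distrib_left sum.distrib)

lemma cinner_add_left:
  "v \<in> carrier_vec n \<Longrightarrow> x \<in> carrier_vec n \<Longrightarrow> cinner n (v + x) w = cinner n v w + cinner n x w"
  unfolding cinner_def by (simp add: distrib_right sum.distrib)

lemma cinner_diff_right:
  "w \<in> carrier_vec n \<Longrightarrow> x \<in> carrier_vec n \<Longrightarrow> cinner n v (w - x) = cinner n v w - cinner n v x"
  unfolding cinner_def by (simp add: right_diff_distrib sum_subtractf)

lemma cinner_lincomb_right:
  assumes "finite J"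
  shows "cinner n x (vec n (\<lambda>a. \<Sum>j\<in>J. f j * y j $ a)) = (\<Sum>j\<in>J. f j * cinner n x (y j))"
proof -
  have "cinner n x (vec n (\<lambda>a. \<Sum>j\<in>J. f j * y j $ a)) = (\<Sum>a<n. \<Sum>j\<in>J. f j * (cnj (x $ a) * y j $ a))"
    unfolding cinner_def by (simp add: sum_distrib_left algebra_simps)
  also have "\<dots> = (\<Sum>j\<in>J. f j * cinner n x (y j))"
    unfolding cinner_def by (subst sum.swap) (simp add: sum_distrib_left)
  finally show ?thesis .
qed

lemma mult_mat_vec_lincomb:
  fixes A :: "'a :: comm_semiring_0 mat"
  assumes A: "A \<in> carrier_mat n n" and y: "\<And>j. j \<in> J \<Longrightarrow> y j \<in> carrier_vec n"
  shows "A *\<^sub>v vec n (\<lambda>a. \<Sum>j\<in>J. f j * y j $ a) = vec n (\<lambda>a. \<Sum>j\<in>J. f j * (A *\<^sub>v y j) $ a)"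
proof (rule eq_vecI)
  fix a assume "a < dim_vec (vec n (\<lambda>a. \<Sum>j\<in>J. f j * (A *\<^sub>v y j) $ a))"
  then have a: "a < n" by simp
  have "(A *\<^sub>v vec n (\<lambda>a. \<Sum>j\<in>J. f j * y j $ a)) $ a = (\<Sum>b<n. \<Sum>j\<in>J. f j * (A $$ (a,b) * y j $ b))"
    using index_mult_mat_vec_sum[OF A _ a]
    by (simp add: sum_distrib_left) (intro sum.cong refl, simp add: algebra_simps)
  also have "\<dots> = (\<Sum>j\<in>J. f j * (A *\<^sub>v y j) $ a)"
    by (subst sum.swap) (simp add: index_mult_mat_vec_sum[OF A y a] sum_distrib_left)
  finally show "(A *\<^sub>v vec n (\<lambda>a. \<Sum>j\<in>J. f j * y j $ a)) $ a
      = vec n (\<lambda>a. \<Sum>j\<in>J. f j * (A *\<^sub>v y j) $ a) $ a"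
    using a by simp
qed (use A in auto)

lemma cinner_self_rotation_le:
  fixes c s :: real
  assumes "c\<^sup>2 + s\<^sup>2 = 1" "x \<in> carrier_vec n" "y \<in> carrier_vec n"
  shows "Re (cinner n (of_real c \<cdot>\<^sub>v x + of_real s \<cdot>\<^sub>v y) (of_real c \<cdot>\<^sub>v x + of_real s \<cdot>\<^sub>v y))
    \<le> Re (cinner n x x) + Re (cinner n y y)"
proof -
  have real_rotation: "(c * a + s * b)\<^sup>2 \<le> a\<^sup>2 + b\<^sup>2" for a b :: real
  proof -
    have "(c * a + s * b)\<^sup>2 + (c * b - s * a)\<^sup>2 = (c\<^sup>2 + s\<^sup>2) * (a\<^sup>2 + b\<^sup>2)"
      by (simp add: power2_eq_square algebra_simps)
    then have "(c * a + s * b)\<^sup>2 + (c * b - s * a)\<^sup>2 = a\<^sup>2 + b\<^sup>2" using assms(1) by simp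
    then show ?thesis using zero_le_power2[of "c * b - s * a"] by linarith
  qed
  have complex_rotation: "(cmod (of_real c * p + of_real s * q))\<^sup>2 \<le> (cmod p)\<^sup>2 + (cmod q)\<^sup>2" for p q
    using real_rotation[of "Re p" "Re q"] real_rotation[of "Im p" "Im q"] by (simp add: cmod_power2)
  have "Re (cinner n (of_real c \<cdot>\<^sub>v x + of_real s \<cdot>\<^sub>v y) (of_real c \<cdot>\<^sub>v x + of_real s \<cdot>\<^sub>v y))
     = (\<Sum>i<n. (cmod (of_real c * x $ i + of_real s * y $ i))\<^sup>2)"
    unfolding cinner_self using assms(2,3) by simp
  also have "\<dots> \<le> (\<Sum>i<n. (cmod (x $ i))\<^sup>2 + (cmod (y $ i))\<^sup>2)"
    by (intro sum_mono complex_rotation)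
  also have "\<dots> = Re (cinner n x x) + Re (cinner n y y)"
    unfolding cinner_self by (simp add: sum.distrib)
  finally show ?thesis .
qed

section \<open>Hermitian and positive semidefinite matrices\<close>

definition hermitian :: "nat \<Rightarrow> complex mat \<Rightarrow> bool" where
  "hermitian n A \<longleftrightarrow> A \<in> carrier_mat n n \<and> (\<forall>i<n. \<forall>j<n. A $$ (i,j) = cnj (A $$ (j,i)))"

lemma hermitian_carrier: "hermitian n A \<Longrightarrow> A \<in> carrier_mat n n"
  unfolding hermitian_def by blast

lemma hermitian_cnj: "hermitian n A \<Longrightarrow> i < n \<Longrightarrow> j < n \<Longrightarrow> cnj (A $$ (i,j)) = A $$ (j,i)"
  unfolding hermitian_def by (metis complex_cnj_cnj)

lemma hermitian_iff_mat_adjoint: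
  assumes A: "A \<in> carrier_mat n n"
  shows "hermitian n A \<longleftrightarrow> mat_adjoint A = A"
proof -
  have adj: "mat_adjoint A \<in> carrier_mat n n"
    using A unfolding mat_adjoint_def by (simp add: mat_of_rows_def)
  have idx: "mat_adjoint A $$ (i,j) = cnj (A $$ (j,i))" if "i < n" "j < n" for i j
    using A that unfolding mat_adjoint_def by (simp add: mat_of_rows_def)
  show ?thesis
  proof
    assume H: "hermitian n A"
    show "mat_adjoint A = A"
    proof (rule eq_matI)
      fix i j assume "i < dim_row A" "j < dim_col A"
      then show "mat_adjoint A $$ (i,j) = A $$ (i,j)" using A idx hermitian_cnj[OF H] by simp
    qed (use A adj in simp_all)
  next
    assume adj_eq: "mat_adjoint A = A"
    have "A $$ (i,j) = cnj (A $$ (j,i))" if "i < n" "j < n" for i j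
      using idx[OF that] unfolding adj_eq .
    then show "hermitian n A" using A unfolding hermitian_def by blast
  qed
qed

lemma cinner_hermitian:
  assumes "hermitian n A" "v \<in> carrier_vec n" "w \<in> carrier_vec n"
  shows "cinner n (A *\<^sub>v v) w = cinner n v (A *\<^sub>v w)"
proof -
  have A: "A \<in> carrier_mat n n" using assms(1) by (rule hermitian_carrier)
  have "cinner n (A *\<^sub>v v) w = (\<Sum>i<n. \<Sum>j<n. cnj (A $$ (i,j)) * cnj (v $ j) * w $ i)"
    unfolding cinner_def
    by (rule sum.cong[OF refl]) (simp add: index_mult_mat_vec_sum[OF A assms(2)] sum_distrib_right)
  also have "\<dots> = (\<Sum>i<n. \<Sum>j<n. cnj (v $ j) * A $$ (j,i) * w $ i)"
    by (intro sum.cong refl) (simp add: hermitian_cnj[OF assms(1)] mult.commute)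
  also have "\<dots> = cinner n v (A *\<^sub>v w)"
    unfolding cinner_def
    by (subst sum.swap) (simp add: index_mult_mat_vec_sum[OF A assms(3)] sum_distrib_left mult.assoc)
  finally show ?thesis .
qed

lemma Im_cinner_hermitian:
  assumes "hermitian n A" "v \<in> carrier_vec n"
  shows "Im (cinner n v (A *\<^sub>v v)) = 0"
proof -
  have "cinner n v (A *\<^sub>v v) = cnj (cinner n v (A *\<^sub>v v))"
    using cinner_hermitian[OF assms(1,2,2)] cinner_commute[of n v "A *\<^sub>v v"] by simp
  from arg_cong[where f = Im, OF this] show ?thesis by simp
qed

lemma cinner_mult_self_hermitian:
  assumes "hermitian n P" "v \<in> carrier_vec n"
  shows "cinner n v ((P * P) *\<^sub>v v) = cinner n (P *\<^sub>v v) (P *\<^sub>v v)"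
  using assms hermitian_carrier[OF assms(1)] by (simp add: cinner_hermitian)

lemma hermitian_add:
  assumes "hermitian n A" "hermitian n B"
  shows "hermitian n (A + B)"
  using hermitian_carrier[OF assms(1)] hermitian_carrier[OF assms(2)]
    hermitian_cnj[OF assms(1)] hermitian_cnj[OF assms(2)]
  unfolding hermitian_def by simp

lemma hermitian_diff:
  assumes "hermitian n A" "hermitian n B"
  shows "hermitian n (A - B)"
  using hermitian_carrier[OF assms(1)] hermitian_carrier[OF assms(2)]
    hermitian_cnj[OF assms(1)] hermitian_cnj[OF assms(2)]
  unfolding hermitian_def by (simp add: minus_carrier_mat)

lemma hermitian_smult_real:
  assumes "hermitian n A"
  shows "hermitian n (complex_of_real c \<cdot>\<^sub>m A)"
  using hermitian_carrier[OF assms] hermitian_cnj[OF assms] unfolding hermitian_def by simp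

lemma hermitian_mult_self:
  assumes "hermitian n P"
  shows "hermitian n (P * P)"
proof -
  have P: "P \<in> carrier_mat n n" using assms by (rule hermitian_carrier)
  have entries: "(P * P) $$ (i,j) = cnj ((P * P) $$ (j,i))" if "i < n" "j < n" for i j
    unfolding index_mult_mat_sum[OF P P that] index_mult_mat_sum[OF P P that(2,1)]
    by (simp add: hermitian_cnj[OF assms] that mult.commute)
  show ?thesis unfolding hermitian_def using mult_carrier_mat[OF P P] entries by blast
qed

lemma psd_carrier: "psd A \<Longrightarrow> A \<in> carrier_mat (dim_row A) (dim_row A)"
  unfolding psd_def by blast

lemma psd_iff_hermitian:
  assumes "A \<in> carrier_mat n n"
  shows "psd A \<longleftrightarrow> hermitian n A \<and> (\<forall>v\<in>carrier_vec n. 0 \<le> Re (cinner n v (A *\<^sub>v v)))"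
  using assms hermitian_iff_mat_adjoint[OF assms] Im_cinner_hermitian
  unfolding psd_def by (auto simp: braket_eq_cinner)

lemma psd_mult_self:
  assumes "hermitian n P"
  shows "psd (P * P)"
proof -
  have P: "P \<in> carrier_mat n n" using assms by (rule hermitian_carrier)
  show ?thesis
    unfolding psd_iff_hermitian[OF mult_carrier_mat[OF P P]]
    using hermitian_mult_self[OF assms] cinner_mult_self_hermitian[OF assms] cinner_self_nonneg
    by simp
qed

lemma psd_add:
  assumes "psd A" "A \<in> carrier_mat n n" "psd B" "B \<in> carrier_mat n n"
  shows "psd (A + B)"
proof -
  have AB: "A + B \<in> carrier_mat n n" using assms(2,4) by simp
  have "hermitian n A" "hermitian n B"
    and "\<And>v. v \<in> carrier_vec n \<Longrightarrow> 0 \<le> Re (cinner n v (A *\<^sub>v v))"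
    and "\<And>v. v \<in> carrier_vec n \<Longrightarrow> 0 \<le> Re (cinner n v (B *\<^sub>v v))"
    using assms psd_iff_hermitian[OF assms(2)] psd_iff_hermitian[OF assms(4)] by auto
  then show ?thesis
    unfolding psd_iff_hermitian[OF AB] using assms(2,4)
    by (simp add: hermitian_add add_mult_distrib_mat_vec[of _ n n] cinner_add_right)
qed

section \<open>Orthonormal bases\<close>

definition orthonormal :: "nat \<Rightarrow> nat \<Rightarrow> (nat \<Rightarrow> complex vec) \<Rightarrow> bool" where
  "orthonormal n k u \<longleftrightarrow> (\<forall>i<k. u i \<in> carrier_vec n) \<and>
     (\<forall>i<k. \<forall>j<k. cinner n (u i) (u j) = (if i = j then 1 else 0))"

lemma orthonormal_carrier: "orthonormal n k u \<Longrightarrow> i < k \<Longrightarrow> u i \<in> carrier_vec n"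
  unfolding orthonormal_def by auto

lemma orthonormal_cinner:
  "orthonormal n k u \<Longrightarrow> i < k \<Longrightarrow> j < k \<Longrightarrow> cinner n (u i) (u j) = (if i = j then 1 else 0)"
  unfolding orthonormal_def by auto

lemma orthonormal_basis_completeness:
  assumes "orthonormal n n u" "a < n" "b < n"
  shows "(\<Sum>i<n. u i $ a * cnj (u i $ b)) = (if a = b then 1 else 0)"
proof -
  define U where "U = mat n n (\<lambda>(a,i). u i $ a)"
  define V where "V = mat n n (\<lambda>(i,b). cnj (u i $ b))"
  have U: "U \<in> carrier_mat n n" and V: "V \<in> carrier_mat n n" unfolding U_def V_def by auto
  have "V * U = 1\<^sub>m n"
  proof (rule eq_matI)
    fix i j assume "i < dim_row (1\<^sub>m n)" "j < dim_col (1\<^sub>m n)"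
    then show "(V * U) $$ (i,j) = 1\<^sub>m n $$ (i,j)"
      using orthonormal_cinner[OF assms(1)] unfolding U_def V_def cinner_def
      by (simp add: scalar_prod_def lessThan_atLeast0)
  qed (auto simp: U_def V_def)
  then have "U * V = 1\<^sub>m n" by (rule mat_mult_left_right_inverse[OF V U])
  then have "(U * V) $$ (a,b) = (if a = b then 1 else 0)" using assms(2,3) by simp
  moreover have "(U * V) $$ (a,b) = (\<Sum>i<n. u i $ a * cnj (u i $ b))"
    using assms(2,3) unfolding U_def V_def by (simp add: scalar_prod_def lessThan_atLeast0)
  ultimately show ?thesis by simp
qed

lemma orthonormal_basis_expansion:
  assumes "orthonormal n n u" "v \<in> carrier_vec n"
  shows "v = vec n (\<lambda>a. \<Sum>i<n. cinner n (u i) v * u i $ a)"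
proof (rule eq_vecI)
  fix a assume "a < dim_vec (vec n (\<lambda>a. \<Sum>i<n. cinner n (u i) v * u i $ a))"
  then have a: "a < n" by simp
  have "(\<Sum>i<n. cinner n (u i) v * u i $ a) = (\<Sum>b<n. v $ b * (\<Sum>i<n. u i $ a * cnj (u i $ b)))"
    unfolding cinner_def sum_distrib_right sum_distrib_left
    by (subst sum.swap) (simp add: algebra_simps)
  also have "\<dots> = (\<Sum>b<n. if b = a then v $ b else 0)"
    by (intro sum.cong refl) (subst orthonormal_basis_completeness[OF assms(1) a]; auto)
  also have "\<dots> = v $ a" using a by simp
  finally show "v $ a = vec n (\<lambda>a. \<Sum>i<n. cinner n (u i) v * u i $ a) $ a" using a by simp
qed (use assms in simp)

lemma orthonormal_basis_vec_eq:
  assumes "orthonormal n n u" "v \<in> carrier_vec n" "w \<in> carrier_vec n"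
    and "\<And>i. i < n \<Longrightarrow> cinner n (u i) v = cinner n (u i) w"
  shows "v = w"
  using orthonormal_basis_expansion[OF assms(1,2)] orthonormal_basis_expansion[OF assms(1,3)] assms(4)
  by simp

lemma cinner_orthonormal_basis:
  assumes "orthonormal n n u" "v \<in> carrier_vec n"
  shows "cinner n v w = (\<Sum>i<n. cnj (cinner n (u i) v) * cinner n (u i) w)"
proof -
  have "cinner n v w = (\<Sum>a<n. \<Sum>i<n. cnj (cinner n (u i) v) * (cnj (u i $ a) * w $ a))"
    by (subst (1) orthonormal_basis_expansion[OF assms])
      (simp add: cinner_def sum_distrib_right mult.assoc)
  also have "\<dots> = (\<Sum>i<n. cnj (cinner n (u i) v) * cinner n (u i) w)"
    unfolding cinner_def by (subst sum.swap) (simp add: sum_distrib_left)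
  finally show ?thesis .
qed

lemma mat_eq_on_orthonormal_basis:
  assumes M: "M \<in> carrier_mat n n" and N: "N \<in> carrier_mat n n" and u: "orthonormal n n u"
    and eq: "\<And>i. i < n \<Longrightarrow> M *\<^sub>v u i = N *\<^sub>v u i"
  shows "M = N"
proof -
  have uc: "\<And>i. i \<in> {..<n} \<Longrightarrow> u i \<in> carrier_vec n" using u by (auto intro: orthonormal_carrier)
  have on_vec: "M *\<^sub>v v = N *\<^sub>v v" if v: "v \<in> carrier_vec n" for v
  proof -
    have "M *\<^sub>v v = vec n (\<lambda>a. \<Sum>i<n. cinner n (u i) v * (M *\<^sub>v u i) $ a)"
      by (subst orthonormal_basis_expansion[OF u v], rule mult_mat_vec_lincomb[OF M uc])
    also have "\<dots> = N *\<^sub>v v"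
      using eq by (subst (2) orthonormal_basis_expansion[OF u v], subst mult_mat_vec_lincomb[OF N uc]) simp_all
    finally show ?thesis .
  qed
  show ?thesis
  proof (rule eq_matI)
    fix a b assume "a < dim_row N" "b < dim_col N"
    then have "(M *\<^sub>v unit_vec n b) $ a = (N *\<^sub>v unit_vec n b) $ a"
      using on_vec[of "unit_vec n b"] N by simp
    then show "M $$ (a,b) = N $$ (a,b)" using M N \<open>a < dim_row N\<close> \<open>b < dim_col N\<close> by simp
  qed (use M N in auto)
qed

(* The rows cnj (u i), i < k, padded with zero rows form a singular matrix; take a kernel vector. *)
lemma exists_orthogonal_vec:
  assumes "k < n" "\<And>i. i < k \<Longrightarrow> u i \<in> carrier_vec n"
  shows "\<exists>v \<in> carrier_vec n. v \<noteq> 0\<^sub>v n \<and> (\<forall>i<k. cinner n (u i) v = 0)"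
proof -
  define c where "c = (\<lambda>i. vec n (\<lambda>j. if i < k then cnj (u i $ j) else 0))"
  define M where "M = mat\<^sub>r n n (\<lambda>i. if i = n - 1 then 0\<^sub>v n else c i)"
  have M: "M \<in> carrier_mat n n" unfolding M_def by auto
  have "det M = 0" unfolding M_def
    by (rule det_row_0) (use assms(1) in \<open>auto simp: c_def\<close>)
  then obtain v where v: "v \<in> carrier_vec n" "v \<noteq> 0\<^sub>v n" "M *\<^sub>v v = 0\<^sub>v n"
    using det_0_iff_vec_prod_zero[OF M] by blast
  have "cinner n (u i) v = 0" if i: "i < k" for i
  proof -
    have "cinner n (u i) v = c i \<bullet> v"
      using i v(1) unfolding c_def cinner_def by (simp add: scalar_prod_def lessThan_atLeast0)
    also have "\<dots> = (M *\<^sub>v v) $ i" using i assms(1) unfolding M_def by (auto simp: c_def)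
    finally show ?thesis using v(3) i assms(1) by simp
  qed
  then show ?thesis using v by blast
qed

definition vec_normalize :: "nat \<Rightarrow> complex vec \<Rightarrow> complex vec" where
  "vec_normalize n v = complex_of_real (1 / sqrt (Re (cinner n v v))) \<cdot>\<^sub>v v"

lemma vec_normalize_carrier: "v \<in> carrier_vec n \<Longrightarrow> vec_normalize n v \<in> carrier_vec n"
  unfolding vec_normalize_def by simp

lemma cinner_vec_normalize_self:
  assumes "v \<in> carrier_vec n" "v \<noteq> 0\<^sub>v n"
  shows "cinner n (vec_normalize n v) (vec_normalize n v) = 1"
proof -
  define r where "r = Re (cinner n v v)"
  have r: "cinner n v v = of_real r" using Im_cinner_self[of n v] unfolding r_def
    by (simp add: complex_eq_iff)
  have "r > 0" using cinner_self_nonpos_imp_zero[OF assms(1)] assms(2) unfolding r_def by force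
  then show ?thesis
    using assms unfolding vec_normalize_def r_def[symmetric]
    by (simp add: cinner_smult_left cinner_smult_right r power2_eq_square[symmetric] less_imp_le
        flip: of_real_mult of_real_power)
qed

lemma mult_mat_vec_normalize:
  "A \<in> carrier_mat n n \<Longrightarrow> v \<in> carrier_vec n \<Longrightarrow> A *\<^sub>v v = \<mu> \<cdot>\<^sub>v v \<Longrightarrow>
    A *\<^sub>v vec_normalize n v = \<mu> \<cdot>\<^sub>v vec_normalize n v"
  unfolding vec_normalize_def by (simp add: mult_mat_vec smult_smult_assoc mult.commute)

lemma orthonormal_extend:
  assumes u: "orthonormal n k u" and v: "v \<in> carrier_vec n" "v \<noteq> 0\<^sub>v n"
    and orth: "\<And>i. i < k \<Longrightarrow> cinner n (u i) v = 0"
  shows "orthonormal n (Suc k) (u(k := vec_normalize n v))"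
proof -
  let ?w = "vec_normalize n v"
  have w: "?w \<in> carrier_vec n" "cinner n ?w ?w = 1"
    using vec_normalize_carrier[OF v(1)] cinner_vec_normalize_self[OF v] by auto
  have "cinner n (u i) ?w = 0" "cinner n ?w (u i) = 0" if "i < k" for i
    using orth[OF that] v(1) cinner_commute[of n ?w "u i"]
    unfolding vec_normalize_def by (simp_all add: cinner_smult_right)
  then show ?thesis
    using u w unfolding orthonormal_def by (auto simp: less_Suc_eq)
qed

lemma orthonormal_extend_basis:
  assumes "orthonormal n k u" "k \<le> n"
  shows "\<exists>u'. orthonormal n n u' \<and> (\<forall>i<k. u' i = u i)"
  using assms(2,1)
proof (induction k arbitrary: u rule: inc_induct)
  case base
  then show ?case by blast
next
  case (step k)
  obtain v where v: "v \<in> carrier_vec n" "v \<noteq> 0\<^sub>v n" "\<forall>i<k. cinner n (u i) v = 0"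
    using exists_orthogonal_vec[OF step.hyps(2), of u] orthonormal_carrier[OF step.prems] by blast
  from step.IH[OF orthonormal_extend[OF step.prems v(1,2)]] v(3)
  show ?case by auto
qed

section \<open>The spectral theorem for Hermitian matrices\<close>

lemma cinner_orthonormal_shifted_lincomb:
  assumes u: "orthonormal n n u" and i: "i < n"
  shows "cinner n (u i) (vec n (\<lambda>a. \<Sum>j<n - k. x $ j * u (j + k) $ a))
    = (if i < k then 0 else x $ (i - k))"
proof -
  have "cinner n (u i) (vec n (\<lambda>a. \<Sum>j<n - k. x $ j * u (j + k) $ a))
      = (\<Sum>j<n - k. if j = i - k \<and> k \<le> i then x $ j else 0)"
    using i unfolding cinner_lincomb_right[OF finite_lessThan]
    by (intro sum.cong refl) (auto simp: orthonormal_cinner[OF u])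
  then show ?thesis using i by (simp cong: conj_cong) arith
qed

lemma complex_mat_eigenvector_exists:
  assumes "(C :: complex mat) \<in> carrier_mat m m" "0 < m"
  shows "\<exists>c \<mu>. c \<in> carrier_vec m \<and> c \<noteq> 0\<^sub>v m \<and> C *\<^sub>v c = \<mu> \<cdot>\<^sub>v c"
  using spectrum_non_empty[OF assms] assms(1)
  unfolding spectrum_def eigenvalue_def eigenvector_def by auto

text \<open>The compression of \<open>A\<close> to the span of \<open>u k, \<dots>, u (n - 1)\<close> has an eigenvector \<open>c\<close>; since
  \<open>A\<close> maps that span into itself, \<open>\<Sum>j. c j u (j + k)\<close> is an eigenvector of \<open>A\<close>.\<close>

lemma hermitian_eigenvector_orthogonal:
  assumes H: "hermitian n A" and u: "orthonormal n n u" and k: "k < n"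
    and ev: "\<And>i. i < k \<Longrightarrow> A *\<^sub>v u i = lam i \<cdot>\<^sub>v u i"
  shows "\<exists>v \<mu>. v \<in> carrier_vec n \<and> v \<noteq> 0\<^sub>v n \<and> (\<forall>i<k. cinner n (u i) v = 0)
    \<and> A *\<^sub>v v = \<mu> \<cdot>\<^sub>v v"
proof -
  have A: "A \<in> carrier_mat n n" using H by (rule hermitian_carrier)
  define m where "m = n - k"
  define C where "C = mat m m (\<lambda>(i,j). cinner n (u (i + k)) (A *\<^sub>v u (j + k)))"
  have C: "C \<in> carrier_mat m m" unfolding C_def by simp
  obtain c \<mu> where c: "c \<in> carrier_vec m" "c \<noteq> 0\<^sub>v m" "C *\<^sub>v c = \<mu> \<cdot>\<^sub>v c"
    using complex_mat_eigenvector_exists[OF C] k unfolding m_def by auto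
  define v where "v = vec n (\<lambda>a. \<Sum>j<m. c $ j * u (j + k) $ a)"
  have v: "v \<in> carrier_vec n" unfolding v_def by simp
  have uc: "\<And>j. j \<in> {..<m} \<Longrightarrow> u (j + k) \<in> carrier_vec n"
    using u unfolding m_def by (auto intro: orthonormal_carrier)
  note coord = cinner_orthonormal_shifted_lincomb[OF u, where k = k, folded m_def]
  have coord_eigen: "cinner n (u i) (A *\<^sub>v v) = cinner n (u i) (\<mu> \<cdot>\<^sub>v v)" if i: "i < n" for i
  proof (cases "i < k")
    case True
    have ui: "u i \<in> carrier_vec n" using u i by (rule orthonormal_carrier)
    have "cinner n (u i) (A *\<^sub>v v) = cnj (lam i) * cinner n (u i) v"
      using cinner_hermitian[OF H ui v] ev[OF True] ui by (simp add: cinner_smult_left)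
    then show ?thesis using coord[OF i] True v unfolding v_def by (simp add: cinner_smult_right)
  next
    case False
    then have ik: "i - k < m" using i unfolding m_def by simp
    have "cinner n (u i) (A *\<^sub>v v) = (\<Sum>j<m. c $ j * cinner n (u i) (A *\<^sub>v u (j + k)))"
      using mult_mat_vec_lincomb[where J = "{..<m}" and y = "\<lambda>j. u (j + k)" and f = "\<lambda>j. c $ j", OF A uc]
      by (simp add: v_def cinner_lincomb_right)
    also have "\<dots> = (C *\<^sub>v c) $ (i - k)"
      using False ik index_mult_mat_vec_sum[OF C c(1) ik] unfolding C_def
      by (simp add: mult.commute)
    also have "\<dots> = cinner n (u i) (\<mu> \<cdot>\<^sub>v v)"
      using c(1,3) ik coord[OF i] False v unfolding v_def by (simp add: cinner_smult_right)
    finally show ?thesis .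
  qed
  have "A *\<^sub>v v = \<mu> \<cdot>\<^sub>v v"
    by (rule orthonormal_basis_vec_eq[OF u _ _ coord_eigen]) (use A v in auto)
  moreover have "v \<noteq> 0\<^sub>v n"
  proof
    assume "v = 0\<^sub>v n"
    then have "c $ j = 0" if "j < m" for j
      using coord[of "j + k" c] that unfolding v_def m_def by (simp add: cinner_def)
    then show False using c(1,2) by (auto intro!: eq_vecI)
  qed
  moreover have "\<forall>i<k. cinner n (u i) v = 0" using coord k unfolding v_def by simp
  ultimately show ?thesis using v by blast
qed

lemma hermitian_eigenvalue_real:
  assumes "hermitian n A" "v \<in> carrier_vec n" "v \<noteq> 0\<^sub>v n" "A *\<^sub>v v = \<mu> \<cdot>\<^sub>v v"
  shows "\<mu> = of_real (Re \<mu>)"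
proof -
  have "cinner n v (A *\<^sub>v v) = \<mu> * cinner n v v"
    using assms(2,4) by (simp add: cinner_smult_right)
  moreover have "Re (cinner n v v) \<noteq> 0"
    using cinner_self_nonpos_imp_zero[OF assms(2)] assms(3) by force
  ultimately have "Im \<mu> = 0"
    using Im_cinner_hermitian[OF assms(1,2)] Im_cinner_self[of n v] by simp
  then show ?thesis by (simp add: complex_eq_iff)
qed

theorem hermitian_spectral:
  assumes H: "hermitian n A"
  shows "\<exists>u l. orthonormal n n u \<and> (\<forall>i<n. A *\<^sub>v u i = of_real (l i) \<cdot>\<^sub>v u i)"
proof -
  have "\<exists>u l. orthonormal n n u \<and> (\<forall>i<k. A *\<^sub>v u i = of_real (l i) \<cdot>\<^sub>v u i)" if "k \<le> n" for k
    using that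
  proof (induction k)
    case 0
    have "orthonormal n 0 u" for u unfolding orthonormal_def by simp
    then show ?case using orthonormal_extend_basis[of n 0] by blast
  next
    case (Suc k)
    then obtain u l where u: "orthonormal n n u" and ev: "\<forall>i<k. A *\<^sub>v u i = of_real (l i) \<cdot>\<^sub>v u i"
      by auto
    have k: "k < n" using Suc by simp
    obtain v \<mu> where v: "v \<in> carrier_vec n" "v \<noteq> 0\<^sub>v n" "\<forall>i<k. cinner n (u i) v = 0"
      and v_eigen: "A *\<^sub>v v = \<mu> \<cdot>\<^sub>v v"
      using hermitian_eigenvector_orthogonal[OF H u k, of "\<lambda>i. of_real (l i)"] ev by blast
    have "orthonormal n k u" using u k unfolding orthonormal_def by auto
    then obtain u' where u': "orthonormal n n u'" "\<forall>i<Suc k. u' i = (u(k := vec_normalize n v)) i"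
      using orthonormal_extend_basis[OF orthonormal_extend[OF _ v(1,2)]] v(3) Suc by blast
    have "A *\<^sub>v vec_normalize n v = of_real (Re \<mu>) \<cdot>\<^sub>v vec_normalize n v"
      using mult_mat_vec_normalize[OF hermitian_carrier[OF H] v(1) v_eigen]
        hermitian_eigenvalue_real[OF H v(1,2) v_eigen] by simp
    then have "\<forall>i<Suc k. A *\<^sub>v u' i = of_real ((l(k := Re \<mu>)) i) \<cdot>\<^sub>v u' i"
      using u'(2) ev by (auto simp: less_Suc_eq)
    then show ?case using u'(1) by blast
  qed
  then show ?thesis by blast
qed

lemma cinner_spectral:
  assumes H: "hermitian n X" and u: "orthonormal n n u"
    and ev: "\<And>i. i < n \<Longrightarrow> X *\<^sub>v u i = of_real (l i) \<cdot>\<^sub>v u i" and v: "v \<in> carrier_vec n"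
  shows "cinner n v (X *\<^sub>v v) = of_real (\<Sum>i<n. l i * (cmod (cinner n (u i) v))\<^sup>2)"
proof -
  have "cnj (cinner n (u i) v) * cinner n (u i) (X *\<^sub>v v) = of_real (l i * (cmod (cinner n (u i) v))\<^sup>2)"
    if i: "i < n" for i
  proof -
    have ui: "u i \<in> carrier_vec n" using u i by (rule orthonormal_carrier)
    have "cinner n (u i) (X *\<^sub>v v) = of_real (l i) * cinner n (u i) v"
      using cinner_hermitian[OF H ui v] ev[OF i] ui by (simp add: cinner_smult_left)
    then have "cnj (cinner n (u i) v) * cinner n (u i) (X *\<^sub>v v)
        = of_real (l i) * (cinner n (u i) v * cnj (cinner n (u i) v))"
      by (simp add: algebra_simps)
    then show ?thesis by (simp only: complex_norm_square[symmetric] of_real_mult)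
  qed
  then show ?thesis by (simp add: cinner_orthonormal_basis[OF u v])
qed

lemma eigenvalue_eq_cinner:
  assumes "orthonormal n n u" "i < n" "X *\<^sub>v u i = of_real l \<cdot>\<^sub>v u i"
  shows "l = Re (cinner n (u i) (X *\<^sub>v u i))"
  using assms orthonormal_cinner[OF assms(1,2,2)] orthonormal_carrier[OF assms(1,2)]
  by (simp add: cinner_smult_right)

section \<open>The positive square root\<close>

definition spectral_mat :: "nat \<Rightarrow> (nat \<Rightarrow> complex vec) \<Rightarrow> (nat \<Rightarrow> real) \<Rightarrow> complex mat" where
  "spectral_mat n u r = mat n n (\<lambda>(a,b). \<Sum>i<n. of_real (r i) * (u i $ a * cnj (u i $ b)))"

lemma hermitian_spectral_mat: "hermitian n (spectral_mat n u r)"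
  unfolding hermitian_def spectral_mat_def by (simp add: mult.commute)

lemma spectral_mat_eigen:
  assumes u: "orthonormal n n u" and j: "j < n"
  shows "spectral_mat n u r *\<^sub>v u j = of_real (r j) \<cdot>\<^sub>v u j"
proof -
  have uj: "u j \<in> carrier_vec n" using u j by (rule orthonormal_carrier)
  show ?thesis
  proof (rule eq_vecI)
  fix a assume "a < dim_vec (of_real (r j) \<cdot>\<^sub>v u j)"
  then have a: "a < n" using uj by simp
  have "(spectral_mat n u r *\<^sub>v u j) $ a = (\<Sum>i<n. of_real (r i) * u i $ a * cinner n (u i) (u j))"
    using a uj unfolding spectral_mat_def cinner_def
    by (simp add: scalar_prod_def lessThan_atLeast0 sum_distrib_left sum_distrib_right mult.assoc)
      (rule sum.swap)
  also have "\<dots> = (\<Sum>i<n. if i = j then of_real (r j) * u j $ a else 0)"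
    by (intro sum.cong refl) (simp add: orthonormal_cinner[OF u _ j])
  also have "\<dots> = (of_real (r j) \<cdot>\<^sub>v u j) $ a"
    using a uj j by simp
  finally show "(spectral_mat n u r *\<^sub>v u j) $ a = (of_real (r j) \<cdot>\<^sub>v u j) $ a" .
  qed (use uj in \<open>simp add: spectral_mat_def\<close>)
qed

lemma psd_spectral_eigenvalue_nonneg:
  assumes "psd A" "A \<in> carrier_mat n n" "orthonormal n n u" "i < n" "A *\<^sub>v u i = of_real (l i) \<cdot>\<^sub>v u i"
  shows "0 \<le> l i"
  using assms psd_iff_hermitian[OF assms(2)] eigenvalue_eq_cinner[OF assms(3,4,5)]
    orthonormal_carrier[OF assms(3,4)] by simp

lemma psd_sqrt_exists:
  assumes psd: "psd A" and A: "A \<in> carrier_mat n n"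
  shows "\<exists>S. psd S \<and> S \<in> carrier_mat n n \<and> S * S = A"
proof -
  have H: "hermitian n A" using psd psd_iff_hermitian[OF A] by blast
  obtain u l where u: "orthonormal n n u" and ev: "\<forall>i<n. A *\<^sub>v u i = of_real (l i) \<cdot>\<^sub>v u i"
    using hermitian_spectral[OF H] by blast
  have l_nonneg: "0 \<le> l i" if "i < n" for i
    using psd_spectral_eigenvalue_nonneg[OF psd A u that] ev that by simp
  define r where "r i = sqrt (l i)" for i
  define S where "S = spectral_mat n u r"
  have S: "S \<in> carrier_mat n n" and HS: "hermitian n S"
    unfolding S_def using hermitian_spectral_mat hermitian_carrier by blast+
  have S_eigen: "S *\<^sub>v u j = of_real (r j) \<cdot>\<^sub>v u j" if "j < n" for j
    unfolding S_def using u that by (rule spectral_mat_eigen)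
  have "psd S"
    unfolding psd_iff_hermitian[OF S]
    using HS cinner_spectral[OF HS u S_eigen] l_nonneg by (auto simp: r_def intro!: sum_nonneg)
  moreover have "S * S = A"
  proof (rule mat_eq_on_orthonormal_basis[OF _ A u])
    fix j assume j: "j < n"
    have uj: "u j \<in> carrier_vec n" using u j by (rule orthonormal_carrier)
    have "r j * r j = l j"
      unfolding r_def using l_nonneg[OF j] by simp
    then show "(S * S) *\<^sub>v u j = A *\<^sub>v u j"
      using S uj ev j by (simp add: S_eigen[OF j] mult_mat_vec smult_smult_assoc flip: of_real_mult)
  qed (use S in simp)
  ultimately show ?thesis using S by blast
qed

text \<open>With \<open>w = T v - r v\<close> one gets \<open>T w = - r w\<close>, which positivity of \<open>T\<close> only allows for
  \<open>w = 0\<close> (for \<open>r = 0\<close>: \<open>\<langle>w, w\<rangle> = \<langle>v, T w\<rangle> = 0\<close>).\<close>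

lemma psd_eigen_of_square_eigen:
  assumes psd: "psd T" and T: "T \<in> carrier_mat n n" and v: "v \<in> carrier_vec n" and r: "0 \<le> r"
    and sq: "T *\<^sub>v (T *\<^sub>v v) = of_real (r * r) \<cdot>\<^sub>v v"
  shows "T *\<^sub>v v = of_real r \<cdot>\<^sub>v v"
proof -
  have HT: "hermitian n T" and T_pos: "\<And>x. x \<in> carrier_vec n \<Longrightarrow> 0 \<le> Re (cinner n x (T *\<^sub>v x))"
    using psd psd_iff_hermitian[OF T] by auto
  define w where "w = T *\<^sub>v v - of_real r \<cdot>\<^sub>v v"
  have w: "w \<in> carrier_vec n" unfolding w_def using T v by simp
  have Tw: "T *\<^sub>v w = (- of_real r) \<cdot>\<^sub>v w"
  proof -
    have "T *\<^sub>v w = of_real (r * r) \<cdot>\<^sub>v v - of_real r \<cdot>\<^sub>v (T *\<^sub>v v)"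
      unfolding w_def using T v sq by (simp add: mult_minus_distrib_mat_vec mult_mat_vec)
    then show ?thesis
      using T v unfolding w_def by (auto intro!: eq_vecI simp: algebra_simps)
  qed
  have "w = 0\<^sub>v n"
  proof (cases "r = 0")
    case True
    then have "w = T *\<^sub>v v" unfolding w_def using T v by (auto intro!: eq_vecI)
    then have "cinner n w w = cinner n v (T *\<^sub>v w)"
      using cinner_hermitian[OF HT v w] by simp
    then show ?thesis
      using Tw True w by (intro cinner_self_nonpos_imp_zero[OF w]) (simp add: cinner_smult_right)
  next
    case False
    have "0 \<le> - r * Re (cinner n w w)"
      using T_pos[OF w] Tw w by (simp add: cinner_smult_right)
    then show ?thesis
      using False r by (intro cinner_self_nonpos_imp_zero[OF w]) (simp add: mult_le_0_iff)
  qed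
  have "(T *\<^sub>v v) $ a = (of_real r \<cdot>\<^sub>v v) $ a" if "a < n" for a
  proof -
    have "(T *\<^sub>v v - of_real r \<cdot>\<^sub>v v) $ a = 0" using \<open>w = 0\<^sub>v n\<close> that unfolding w_def by simp
    then show ?thesis using T v that by simp
  qed
  then show ?thesis using T v by (intro eq_vecI) auto
qed

lemma psd_sqrt_unique:
  assumes "psd S" "S \<in> carrier_mat n n" "psd T" "T \<in> carrier_mat n n" "S * S = T * T"
  shows "S = T"
proof -
  have "hermitian n S" using assms(1) psd_iff_hermitian[OF assms(2)] by blast
  then obtain u r where u: "orthonormal n n u" and ev: "\<forall>i<n. S *\<^sub>v u i = of_real (r i) \<cdot>\<^sub>v u i"
    using hermitian_spectral by blast
  show ?thesis
  proof (rule mat_eq_on_orthonormal_basis[OF assms(2,4) u])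
    fix j assume j: "j < n"
    have uj: "u j \<in> carrier_vec n" using u j by (rule orthonormal_carrier)
    have "T *\<^sub>v (T *\<^sub>v u j) = S *\<^sub>v (S *\<^sub>v u j)"
      using assoc_mult_mat_vec[OF assms(2,2) uj] assoc_mult_mat_vec[OF assms(4,4) uj] assms(5) by simp
    also have "\<dots> = of_real (r j * r j) \<cdot>\<^sub>v u j"
      using ev j assms(2) uj by (simp add: mult_mat_vec smult_smult_assoc)
    finally have "T *\<^sub>v u j = of_real (r j) \<cdot>\<^sub>v u j"
      using psd_eigen_of_square_eigen[OF assms(3,4) uj] psd_spectral_eigenvalue_nonneg[OF assms(1,2) u j] ev j
      by simp
    then show "S *\<^sub>v u j = T *\<^sub>v u j" using ev j by simp
  qed
qed

lemma psd_sqrt: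
  assumes "psd A" "A \<in> carrier_mat n n"
  shows "psd (psd_sqrt A)" "psd_sqrt A \<in> carrier_mat n n" "psd_sqrt A * psd_sqrt A = A"
proof -
  have "\<exists>!S. psd S \<and> dim_row S = dim_row A \<and> S * S = A"
  proof (rule ex_ex1I)
    show "\<exists>S. psd S \<and> dim_row S = dim_row A \<and> S * S = A"
      using psd_sqrt_exists[OF assms] assms(2) by auto
  next
    fix S T assume "psd S \<and> dim_row S = dim_row A \<and> S * S = A" "psd T \<and> dim_row T = dim_row A \<and> T * T = A"
    then show "S = T" using assms(2) psd_sqrt_unique[of S n T] psd_carrier[of S] psd_carrier[of T] by auto
  qed
  then have "psd (psd_sqrt A) \<and> dim_row (psd_sqrt A) = dim_row A \<and> psd_sqrt A * psd_sqrt A = A"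
    unfolding psd_sqrt_def by (rule theI')
  then show "psd (psd_sqrt A)" "psd_sqrt A \<in> carrier_mat n n" "psd_sqrt A * psd_sqrt A = A"
    using assms(2) psd_carrier[of "psd_sqrt A"] by auto
qed

section \<open>Comparing quadratic forms through squares\<close>

lemma shifted_norm_le_imp_nonpos:
  fixes l :: real
  assumes S: "S \<in> carrier_mat n n" and u: "u \<in> carrier_vec n" "cinner n u u = 1"
    and pos: "0 \<le> Re (cinner n u (S *\<^sub>v u))"
    and le: "Re (cinner n (S *\<^sub>v u + of_real l \<cdot>\<^sub>v u) (S *\<^sub>v u + of_real l \<cdot>\<^sub>v u))
      \<le> Re (cinner n (S *\<^sub>v u) (S *\<^sub>v u))"
  shows "l \<le> 0"
proof -
  have Su: "S *\<^sub>v u \<in> carrier_vec n" using S u by simp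
  have "Re (cinner n (S *\<^sub>v u + of_real l \<cdot>\<^sub>v u) (S *\<^sub>v u + of_real l \<cdot>\<^sub>v u))
      = Re (cinner n (S *\<^sub>v u) (S *\<^sub>v u)) + 2 * l * Re (cinner n u (S *\<^sub>v u)) + l * l"
    using Su u cinner_commute[of n "S *\<^sub>v u" u]
    by (simp add: cinner_add_left cinner_add_right cinner_smult_left cinner_smult_right algebra_simps)
  then have "l * (2 * Re (cinner n u (S *\<^sub>v u)) + l) \<le> 0" using le by (simp add: algebra_simps)
  then show ?thesis using pos by (smt (verit) mult_pos_pos)
qed

text \<open>Operator monotonicity of the square root in the form needed here: \<open>H\<^sup>2 \<le> S\<^sup>2\<close> and \<open>S \<ge> 0\<close>
  imply \<open>H \<le> S\<close>.\<close>

theorem cinner_le_of_square_le: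
  assumes HH: "hermitian n H" and psd: "psd S" and S: "S \<in> carrier_mat n n"
    and sq: "\<And>v. v \<in> carrier_vec n \<Longrightarrow> Re (cinner n (H *\<^sub>v v) (H *\<^sub>v v)) \<le> Re (cinner n (S *\<^sub>v v) (S *\<^sub>v v))"
    and psi: "psi \<in> carrier_vec n"
  shows "Re (cinner n psi (H *\<^sub>v psi)) \<le> Re (cinner n psi (S *\<^sub>v psi))"
proof -
  have H: "H \<in> carrier_mat n n" using HH by (rule hermitian_carrier)
  have HS: "hermitian n S" and S_pos: "\<And>v. v \<in> carrier_vec n \<Longrightarrow> 0 \<le> Re (cinner n v (S *\<^sub>v v))"
    using psd psd_iff_hermitian[OF S] by auto
  have HX: "hermitian n (H - S)" by (rule hermitian_diff[OF HH HS])
  obtain u l where u: "orthonormal n n u" and ev: "\<forall>i<n. (H - S) *\<^sub>v u i = of_real (l i) \<cdot>\<^sub>v u i"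
    using hermitian_spectral[OF HX] by blast
  have "l i \<le> 0" if i: "i < n" for i
  proof (rule shifted_norm_le_imp_nonpos[OF S])
    have ui: "u i \<in> carrier_vec n" using u i by (rule orthonormal_carrier)
    have "H *\<^sub>v u i = S *\<^sub>v u i + of_real (l i) \<cdot>\<^sub>v u i"
    proof (rule eq_vecI)
      fix a assume "a < dim_vec (S *\<^sub>v u i + of_real (l i) \<cdot>\<^sub>v u i)"
      then have a: "a < n" using ui by simp
      have "((H - S) *\<^sub>v u i) $ a = (of_real (l i) \<cdot>\<^sub>v u i) $ a" using ev i by simp
      then show "(H *\<^sub>v u i) $ a = (S *\<^sub>v u i + of_real (l i) \<cdot>\<^sub>v u i) $ a"
        using a H S ui minus_mult_distrib_mat_vec[OF H S ui] by (simp add: diff_eq_eq add.commute)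
    qed (use H S ui in simp)
    then show "Re (cinner n (S *\<^sub>v u i + of_real (l i) \<cdot>\<^sub>v u i) (S *\<^sub>v u i + of_real (l i) \<cdot>\<^sub>v u i))
        \<le> Re (cinner n (S *\<^sub>v u i) (S *\<^sub>v u i))"
      using sq[OF ui] by simp
  qed (use u i orthonormal_carrier orthonormal_cinner S_pos in auto)
  then have "Re (cinner n psi ((H - S) *\<^sub>v psi)) \<le> 0"
    using cinner_spectral[OF HX u _ psi] ev by (auto intro!: sum_nonpos simp: mult_nonpos_nonneg)
  then show ?thesis
    using H S psi by (simp add: minus_mult_distrib_mat_vec cinner_diff_right)
qed

lemma rotated_cinner_le:
  fixes c s :: real
  assumes H1: "hermitian n P1" and H2: "hermitian n P2"
    and psd: "psd S" "S \<in> carrier_mat n n" "S * S = P1 * P1 + P2 * P2"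
    and cs: "c\<^sup>2 + s\<^sup>2 = 1" and psi: "psi \<in> carrier_vec n"
  shows "c * Re (cinner n psi (P1 *\<^sub>v psi)) + s * Re (cinner n psi (P2 *\<^sub>v psi))
    \<le> Re (cinner n psi (S *\<^sub>v psi))"
proof -
  have P1: "P1 \<in> carrier_mat n n" and P2: "P2 \<in> carrier_mat n n"
    using H1 H2 by (auto intro: hermitian_carrier)
  have HS: "hermitian n S" using psd psd_iff_hermitian by blast
  define H where "H = of_real c \<cdot>\<^sub>m P1 + of_real s \<cdot>\<^sub>m P2"
  have HH: "hermitian n H" unfolding H_def by (intro hermitian_add hermitian_smult_real H1 H2)
  have Hv: "H *\<^sub>v v = of_real c \<cdot>\<^sub>v (P1 *\<^sub>v v) + of_real s \<cdot>\<^sub>v (P2 *\<^sub>v v)"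
    if "v \<in> carrier_vec n" for v
    unfolding H_def using P1 P2 that
    by (simp add: add_mult_distrib_mat_vec[of _ n n] smult_mat_mult_vec)
  have "Re (cinner n psi (H *\<^sub>v psi)) \<le> Re (cinner n psi (S *\<^sub>v psi))"
  proof (rule cinner_le_of_square_le[OF HH psd(1,2) _ psi])
    fix v :: "complex vec" assume v: "v \<in> carrier_vec n"
    have "cinner n (S *\<^sub>v v) (S *\<^sub>v v) = cinner n (P1 *\<^sub>v v) (P1 *\<^sub>v v) + cinner n (P2 *\<^sub>v v) (P2 *\<^sub>v v)"
      using P1 P2 v
      by (simp add: add_mult_distrib_mat_vec[of _ n n] cinner_add_right psd(3)
          flip: cinner_mult_self_hermitian[OF HS v] cinner_mult_self_hermitian[OF H1 v]
          cinner_mult_self_hermitian[OF H2 v])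
    then show "Re (cinner n (H *\<^sub>v v) (H *\<^sub>v v)) \<le> Re (cinner n (S *\<^sub>v v) (S *\<^sub>v v))"
      unfolding Hv[OF v] using cinner_self_rotation_le[OF cs] P1 P2 v by simp
  qed
  then show ?thesis
    unfolding Hv[OF psi] using P1 P2 psi by (simp add: cinner_add_right cinner_smult_right)
qed

lemma sum_squares_le_of_rotations_le:
  fixes a1 a2 b :: real
  assumes "\<And>c s. c\<^sup>2 + s\<^sup>2 = 1 \<Longrightarrow> c * a1 + s * a2 \<le> b"
  shows "a1\<^sup>2 + a2\<^sup>2 \<le> b\<^sup>2"
proof (cases "a1\<^sup>2 + a2\<^sup>2 = 0")
  case False
  define r where "r = sqrt (a1\<^sup>2 + a2\<^sup>2)"
  have pos: "0 < a1\<^sup>2 + a2\<^sup>2" using False by (simp add: sum_power2_gt_zero_iff sum_power2_eq_zero_iff)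
  then have r: "r > 0" "r\<^sup>2 = a1\<^sup>2 + a2\<^sup>2" unfolding r_def by simp_all
  have "(a1 / r)\<^sup>2 + (a2 / r)\<^sup>2 = 1"
    using r pos by (simp add: sum_power2_gt_zero_iff power_divide add_divide_distrib[symmetric])
  then have "(a1 / r) * a1 + (a2 / r) * a2 \<le> b" by (rule assms)
  moreover have "(a1 / r) * a1 + (a2 / r) * a2 = r"
    using r by (simp add: field_simps power2_eq_square)
  ultimately have "r \<le> b" by simp
  then show ?thesis using r by (metis less_imp_le power_mono)
qed simp

theorem mainTheorem5:
  fixes d :: nat and psi :: "complex vec" and P1 P2 :: "complex mat"
  assumes "psi \<in> carrier_vec d"
    and "P1 \<in> carrier_mat d d" and "P2 \<in> carrier_mat d d"
    and "psd P1" and "psd P2"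
  shows "(Re (braket psi P1))\<^sup>2 + (Re (braket psi P2))\<^sup>2
           \<le> (Re (braket psi (psd_sqrt (P1 * P1 + P2 * P2))))\<^sup>2"
proof -
  have H1: "hermitian d P1" and H2: "hermitian d P2"
    using assms(2-5) psd_iff_hermitian by blast+
  have A: "P1 * P1 + P2 * P2 \<in> carrier_mat d d" using assms(2,3) by simp
  have "psd (P1 * P1 + P2 * P2)"
    by (rule psd_add[OF psd_mult_self[OF H1] mult_carrier_mat[OF assms(2,2)]
          psd_mult_self[OF H2] mult_carrier_mat[OF assms(3,3)]])
  note S = psd_sqrt[OF this A]
  have "c * Re (braket psi P1) + s * Re (braket psi P2)
      \<le> Re (braket psi (psd_sqrt (P1 * P1 + P2 * P2)))" if "c\<^sup>2 + s\<^sup>2 = 1" for c s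
    unfolding braket_eq_cinner[OF assms(1)] by (rule rotated_cinner_le[OF H1 H2 S that assms(1)])
  then show ?thesis by (rule sum_squares_le_of_rotations_le)
qed

end
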